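(* Every nonempty tiling $T$ contains a dense triple, i.e. a triple of the form $(j-1)\,j\,(j+1)$ for some $2\le j\le n-1$.
   Context: Fix an integer $n\ge 3$ and write $[n]=\{1,\dots,n\}$. Let $\Lambda$ be the set of 3-element subsets of $[n]$; a triple $\{i,j,k\}$ with $i<j<k$ is written $ijk$. For a 4-element subset $F=\{i<j<k<l\}$ of $[n]$, the stick of $F$ is the sequence $(ijk,\ ijl,\ ikl,\ jkl)$. A tiling (the inversion set of a rhombus tiling of the zonogon $Z(n;2)$) is a subset $T\subseteq\Lambda$ such that for every 4-element $F\subseteq[n]$, $T\cap\mathrm{stick}(F)$ is an initial segment or a final segment of the stick (empty set and whole stick allowed). *)

theory Defs
  imports Main
begin

text \<open>Triples are 3-element subsets of [n] = {1..n}; the triple ijk with i<j<k is the set {i,j,k}.\<close>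

definition triples :: "nat \<Rightarrow> nat set set" where
  "triples n = {S. S \<subseteq> {1..n} \<and> card S = 3}"

definition stick :: "nat \<Rightarrow> nat \<Rightarrow> nat \<Rightarrow> nat \<Rightarrow> nat set list" where
  "stick i j k l = [{i,j,k}, {i,j,l}, {i,k,l}, {j,k,l}]"

definition initial_or_final :: "nat set list \<Rightarrow> nat set set \<Rightarrow> bool" where
  "initial_or_final xs A \<longleftrightarrow>
     (\<exists>m\<le>length xs. A = set (take m xs) \<or> A = set (drop m xs))"

definition tiling :: "nat \<Rightarrow> nat set set \<Rightarrow> bool" where
  "tiling n T \<longleftrightarrow> T \<subseteq> triples n \<and>
     (\<forall>i j k l. 1 \<le> i \<and> i < j \<and> j < k \<and> k < l \<and> l \<le> n \<longrightarrow>
        initial_or_final (stick i j k l) (T \<inter> set (stick i j k l)))"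

end

theory Submission
  imports Defs
begin

text \<open>
  Induct on the width \<open>k - i\<close> of a triple \<open>ijk \<in> T\<close>. If \<open>ijk\<close> is not dense, pick \<open>m\<close>
  with \<open>i < m < k\<close> and \<open>m \<noteq> j\<close>. The stick of \<open>{i, j, k, m}\<close> contains \<open>ijk\<close>, so its
  intersection with \<open>T\<close> is a nonempty initial or final segment and therefore contains
  the first or the last element of the stick: the three smallest or the three largest
  elements of \<open>{i, j, k, m}\<close>, in either case a narrower triple of \<open>T\<close>.
\<close>

lemma initial_or_final_contains_hd_or_last:
  assumes "initial_or_final xs A" and "A \<noteq> {}"
  shows "hd xs \<in> A \<or> last xs \<in> A"
proof -
  obtain m where "m \<le> length xs" and "A = set (take m xs) \<or> A = set (drop m xs)"
    using assms(1) unfolding initial_or_final_def by blast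
  then consider "A = set (take m xs)" | "A = set (drop m xs)"
    by blast
  then show ?thesis
  proof cases
    case 1
    with assms(2) have "take m xs \<noteq> []" and "m > 0"
      by auto
    then have "hd xs \<in> set (take m xs)"
      by (metis hd_in_set hd_take)
    with 1 show ?thesis by blast
  next
    case 2
    with assms(2) have "drop m xs \<noteq> []" and "m < length xs"
      by auto
    then have "last xs \<in> set (drop m xs)"
      by (metis last_in_set last_drop)
    with 2 show ?thesis by blast
  qed
qed

lemma tiling_stick_end_mem:
  assumes "tiling n T" and "1 \<le> i" "i < j" "j < k" "k < l" "l \<le> n"
    and "T \<inter> set (stick i j k l) \<noteq> {}"
  shows "{i, j, k} \<in> T \<or> {j, k, l} \<in> T"
proof -
  have "initial_or_final (stick i j k l) (T \<inter> set (stick i j k l))"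
    using assms(1-6) unfolding tiling_def by blast
  from initial_or_final_contains_hd_or_last[OF this assms(7)] show ?thesis
    by (simp add: stick_def)
qed

lemma tiling_triple_bounds:
  assumes "tiling n T" and "{i, j, k} \<in> T"
  shows "1 \<le> i" and "k \<le> n"
  using assms unfolding tiling_def triples_def by auto

lemma tiling_dense_triple_from_triple:
  assumes "tiling n T" and "{i, j, k} \<in> T" and "i < j" "j < k"
  shows "\<exists>j. 2 \<le> j \<and> j \<le> n - 1 \<and> {j - 1, j, j + 1} \<in> T"
  using assms(2-)
proof (induction "k - i" arbitrary: i j k rule: less_induct)
  case less
  have "1 \<le> i" "k \<le> n"
    using tiling_triple_bounds[OF assms(1) less.prems(1)] by auto
  consider "j = i + 1" "k = j + 1" | "i + 1 < j" | "j + 1 < k"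
    using less.prems(2,3) by linarith
  then show ?case
  proof cases
    case 1
    then have "{j - 1, j, j + 1} = {i, j, k}"
      by auto
    with 1 \<open>1 \<le> i\<close> \<open>k \<le> n\<close> less.prems(1) show ?thesis
      by (intro exI[of _ j]) auto
  next
    case 2
    have "{i, i + 1, j} \<in> T \<or> {i + 1, j, k} \<in> T"
      using tiling_stick_end_mem[OF assms(1), of i "i + 1" j k] 2 less.prems \<open>1 \<le> i\<close> \<open>k \<le> n\<close>
      by (auto simp: stick_def)
    then show ?thesis
    proof
      assume "{i, i + 1, j} \<in> T"
      then show ?thesis
        using less.hyps[of j i "i + 1"] 2 less.prems by auto
    next
      assume "{i + 1, j, k} \<in> T"
      then show ?thesis
        using less.hyps[of k "i + 1" j] 2 less.prems by auto
    qed
  next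
    case 3
    have "{i, j, j + 1} \<in> T \<or> {j, j + 1, k} \<in> T"
      using tiling_stick_end_mem[OF assms(1), of i j "j + 1" k] 3 less.prems \<open>1 \<le> i\<close> \<open>k \<le> n\<close>
      by (auto simp: stick_def)
    then show ?thesis
    proof
      assume "{i, j, j + 1} \<in> T"
      then show ?thesis
        using less.hyps[of "j + 1" i j] 3 less.prems by auto
    next
      assume "{j, j + 1, k} \<in> T"
      then show ?thesis
        using less.hyps[of k j "j + 1"] 3 less.prems by auto
    qed
  qed
qed

lemma card_3_obtain_sorted:
  fixes S :: "'a::linorder set"
  assumes "card S = 3"
  obtains i j k where "i < j" "j < k" "S = {i, j, k}"
proof -
  have "finite S"
    using assms by (intro card_ge_0_finite) simp
  define xs where "xs = sorted_list_of_set S"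
  have xs: "sorted_wrt (<) xs" "set xs = S" "length xs = 3"
    using \<open>finite S\<close> assms by (simp_all add: xs_def)
  then obtain i j k where "xs = [i, j, k]"
    by (metis (no_types) length_0_conv length_Suc_conv numeral_3_eq_3)
  with xs show ?thesis
    by (intro that[of i j k]) auto
qed

theorem lemma3:
  fixes n :: nat and T :: "nat set set"
  assumes "n \<ge> 3" and "tiling n T" and "T \<noteq> {}"
  shows "\<exists>j. 2 \<le> j \<and> j \<le> n - 1 \<and> {j - 1, j, j + 1} \<in> T"
proof -
  obtain S where "S \<in> T"
    using assms(3) by blast
  moreover from this have "card S = 3"
    using assms(2) unfolding tiling_def triples_def by auto
  ultimately obtain i j k where "i < j" "j < k" "{i, j, k} \<in> T"
    by (metis card_3_obtain_sorted)
  then show ?thesis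
    using tiling_dense_triple_from_triple[OF assms(2)] by blast
qed

end
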